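(* Let $Y=(y^{(1)},\dots,y^{(n)})$ be uniformly distributed on $\{-1,+1\}^n$, let $\eta^{(1)},\dots,\eta^{(n)}$ be i.i.d. $\mathcal{N}(0,\sigma_\eta^2)$ independent of $Y$, and release $Y_\eta=(y^{(1)}+\eta^{(1)},\dots,y^{(n)}+\eta^{(n)})$ (together with fixed, non-random design vectors $x^{(i)}$). If $\gamma\in(0,1)$ satisfies $\gamma\le1-\frac{2}{n}$ and $$\sigma_\eta^2\ge\frac{8}{(1-\gamma)\log2},$$ then $$\inf_{\mathcal{A}}\mathbb{P}_{Y,\eta}\big[\mathcal{A}(Y_\eta)\neq Y\big]\ge\gamma,$$ where the infimum is over all maps $\mathcal{A}:\mathbb{R}^n\to\{-1,+1\}^n$.
   Context: This is the perturbation of the responses in generalized linear models (and nonparametric generalized regression) with fixed design and sufficient statistic $t(y)=y$. Logarithms are natural. *)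

theory Defs
  imports "HOL-Probability.Probability"
begin

text \<open>Vectors in R^n / {-1,+1}^n are extensional functions nat => real on {..<n}.\<close>

definition label_space :: "nat \<Rightarrow> (nat \<Rightarrow> real) set" where
  "label_space n = PiE {..<n} (\<lambda>_. {-1, 1})"

definition Y_dist :: "nat \<Rightarrow> (nat \<Rightarrow> real) measure" where
  "Y_dist n = measure_pmf (pmf_of_set (label_space n))"

text \<open>eta^(1..n) i.i.d. N(0, sigma^2) (sigma is the standard deviation).\<close>
definition noise_dist :: "nat \<Rightarrow> real \<Rightarrow> (nat \<Rightarrow> real) measure" where
  "noise_dist n \<sigma> = PiM {..<n} (\<lambda>_. density lborel (normal_density 0 \<sigma>))"

definition joint_dist :: "nat \<Rightarrow> real \<Rightarrow> ((nat \<Rightarrow> real) \<times> (nat \<Rightarrow> real)) measure" where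
  "joint_dist n \<sigma> = Y_dist n \<Otimes>\<^sub>M noise_dist n \<sigma>"

definition perturb :: "nat \<Rightarrow> (nat \<Rightarrow> real) \<Rightarrow> (nat \<Rightarrow> real) \<Rightarrow> (nat \<Rightarrow> real)" where
  "perturb n y e = (\<lambda>i\<in>{..<n}. y i + e i)"

definition error_prob :: "nat \<Rightarrow> real \<Rightarrow> ((nat \<Rightarrow> real) \<Rightarrow> (nat \<Rightarrow> real)) \<Rightarrow> real" where
  "error_prob n \<sigma> A = measure (joint_dist n \<sigma>)
     {ye \<in> space (joint_dist n \<sigma>). A (perturb n (fst ye) (snd ye)) \<noteq> fst ye}"

end

theory Submission
  imports Defs
begin

text \<open>A decoder \<open>A\<close> can be right about the label \<open>y\<close> from the observation \<open>z = y + \<eta>\<close> only if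
  \<open>y = A z\<close>. Hence the success probability is at most \<open>2\<^sup>-\<^sup>n\<close> times the integral over \<open>z\<close> of the
  largest of the \<open>2\<^sup>n\<close> Gaussian densities centred at the sign vectors, and this maximum factorises
  into the coordinatewise maxima of the densities of \<open>N(\<plusminus>1, \<sigma>\<^sup>2)\<close>. One such maximum has mass at most
  \<open>1 + 2/(\<surd>(2\<pi>) \<sigma>)\<close>, so success has probability at most \<open>((1 + 2/(\<surd>(2\<pi>) \<sigma>))/2)\<^sup>n \<le> (3/4)\<^sup>n \<le> 2/n\<close>
  as soon as \<open>\<sigma>\<^sup>2 \<ge> 8\<close>.\<close>

lemma PiM_density_lborel:
  fixes f :: "'i \<Rightarrow> real \<Rightarrow> ennreal"
  assumes fin: "finite I"
    and prob: "\<And>i. prob_space (density lborel (f i))"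
    and meas: "\<And>i. f i \<in> borel_measurable borel"
  shows "PiM I (\<lambda>i. density lborel (f i)) = density (PiM I (\<lambda>_. lborel)) (\<lambda>x. \<Prod>i\<in>I. f i (x i))"
proof -
  interpret P: product_prob_space "\<lambda>i. density lborel (f i)"
    using prob by (intro product_prob_spaceI)
  interpret L: product_sigma_finite "\<lambda>_. lborel :: real measure"
    by (intro product_sigma_finite.intro) (simp add: sigma_finite_lborel)
  show ?thesis
  proof (rule P.PiM_eqI[symmetric, OF fin])
    show "sets (density (PiM I (\<lambda>_. lborel)) (\<lambda>x. \<Prod>i\<in>I. f i (x i))) = sets (PiM I (\<lambda>i. density lborel (f i)))"
      unfolding sets_density by (intro sets_PiM_cong) auto
  next
    fix A assume "\<And>i. i \<in> I \<Longrightarrow> A i \<in> sets (density lborel (f i))"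
    then have A: "\<And>i. i \<in> I \<Longrightarrow> A i \<in> sets borel" by simp
    have "emeasure (density (PiM I (\<lambda>_. lborel)) (\<lambda>x. \<Prod>i\<in>I. f i (x i))) (Pi\<^sub>E I A)
       = (\<integral>\<^sup>+x. (\<Prod>i\<in>I. f i (x i)) * indicator (Pi\<^sub>E I A) x \<partial>PiM I (\<lambda>_. lborel))"
      using A meas by (subst emeasure_density) (auto intro!: sets_PiM_I_finite fin)
    also have "\<dots> = (\<integral>\<^sup>+x. (\<Prod>i\<in>I. f i (x i) * indicator (A i) (x i)) \<partial>PiM I (\<lambda>_. lborel))"
    proof (rule nn_integral_cong)
      fix x assume "x \<in> space (PiM I (\<lambda>_. lborel :: real measure))"
      then have "indicator (Pi\<^sub>E I A) x = (\<Prod>i\<in>I. indicator (A i) (x i) :: ennreal)"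
        using fin by (auto simp: space_PiM indicator_def PiE_def Pi_def)
      then show "(\<Prod>i\<in>I. f i (x i)) * indicator (Pi\<^sub>E I A) x = (\<Prod>i\<in>I. f i (x i) * indicator (A i) (x i))"
        by (simp add: prod.distrib)
    qed
    also have "\<dots> = (\<Prod>i\<in>I. \<integral>\<^sup>+t. f i t * indicator (A i) t \<partial>lborel)"
      using A meas by (intro L.product_nn_integral_prod fin) auto
    also have "\<dots> = (\<Prod>i\<in>I. emeasure (density lborel (f i)) (A i))"
      using A meas by (intro prod.cong refl) (simp add: emeasure_density)
    finally show "emeasure (density (PiM I (\<lambda>_. lborel)) (\<lambda>x. \<Prod>i\<in>I. f i (x i))) (Pi\<^sub>E I A)
        = (\<Prod>i\<in>I. emeasure (density lborel (f i)) (A i))" .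
  qed
qed

lemma emeasure_normal_density_translate:
  assumes "S \<in> sets borel"
  shows "emeasure (density lborel (normal_density \<mu> \<sigma>)) S
       = emeasure (density lborel (normal_density 0 \<sigma>)) ((\<lambda>t. \<mu> + t) -` S)"
proof -
  have "emeasure (density lborel (normal_density \<mu> \<sigma>)) S
      = (\<integral>\<^sup>+t. ennreal (normal_density \<mu> \<sigma> t) * indicator S t \<partial>lborel)"
    using assms by (simp add: emeasure_density)
  also have "\<dots> = (\<integral>\<^sup>+t. ennreal (normal_density \<mu> \<sigma> (\<mu> + 1 * t)) * indicator S (\<mu> + 1 * t) \<partial>lborel)"
    using assms by (subst nn_integral_real_affine[where c=1 and t=\<mu>]) auto
  also have "\<dots> = (\<integral>\<^sup>+t. ennreal (normal_density 0 \<sigma> t) * indicator ((\<lambda>t. \<mu> + t) -` S) t \<partial>lborel)"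
    by (simp add: normal_density_def indicator_def)
  also have "\<dots> = emeasure (density lborel (normal_density 0 \<sigma>)) ((\<lambda>t. \<mu> + t) -` S)"
    using assms by (subst emeasure_density) (auto intro!: measurable_sets[of _ borel borel, simplified])
  finally show ?thesis .
qed

lemma sets_noise_dist: "sets (noise_dist n \<sigma>) = sets (PiM {..<n} (\<lambda>_. lborel))"
  unfolding noise_dist_def by (intro sets_PiM_cong) auto

lemma space_noise_dist: "space (noise_dist n \<sigma>) = PiE {..<n} (\<lambda>_. UNIV)"
  unfolding noise_dist_def by (simp add: space_PiM)

lemma measurable_perturb: "perturb n y \<in> measurable (noise_dist n \<sigma>) (PiM {..<n} (\<lambda>_. lborel))"
  unfolding measurable_cong_sets[OF sets_noise_dist refl] perturb_def by measurable

lemma distr_perturb_noise_dist: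
  assumes "0 < \<sigma>"
  shows "distr (noise_dist n \<sigma>) (PiM {..<n} (\<lambda>_. lborel)) (perturb n y)
       = PiM {..<n} (\<lambda>i. density lborel (normal_density (y i) \<sigma>))"
proof -
  interpret P: product_prob_space "\<lambda>i. density lborel (normal_density (y i) \<sigma>)"
    using assms by (intro product_prob_spaceI prob_space_normal_density)
  interpret Q: product_prob_space "\<lambda>i. density lborel (normal_density 0 \<sigma>)"
    using assms by (intro product_prob_spaceI prob_space_normal_density)
  show ?thesis
  proof (rule P.PiM_eqI)
    show "sets (distr (noise_dist n \<sigma>) (PiM {..<n} (\<lambda>_. lborel)) (perturb n y))
        = sets (PiM {..<n} (\<lambda>i. density lborel (normal_density (y i) \<sigma>)))"
      unfolding sets_distr by (intro sets_PiM_cong) auto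
  next
    fix A assume "\<And>i. i \<in> {..<n} \<Longrightarrow> A i \<in> sets (density lborel (normal_density (y i) \<sigma>))"
    then have A: "\<And>i. i \<in> {..<n} \<Longrightarrow> A i \<in> sets borel" by simp
    have preimage: "perturb n y -` Pi\<^sub>E {..<n} A \<inter> space (noise_dist n \<sigma>)
        = Pi\<^sub>E {..<n} (\<lambda>i. (\<lambda>t. y i + t) -` A i)"
      by (auto simp: space_noise_dist perturb_def PiE_def Pi_def extensional_def)
    have "emeasure (distr (noise_dist n \<sigma>) (PiM {..<n} (\<lambda>_. lborel)) (perturb n y)) (Pi\<^sub>E {..<n} A)
        = emeasure (noise_dist n \<sigma>) (Pi\<^sub>E {..<n} (\<lambda>i. (\<lambda>t. y i + t) -` A i))"
      using A measurable_perturb preimage by (subst emeasure_distr) (auto intro!: sets_PiM_I_finite)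
    also have "\<dots> = (\<Prod>i\<in>{..<n}. emeasure (density lborel (normal_density 0 \<sigma>)) ((\<lambda>t. y i + t) -` A i))"
      unfolding noise_dist_def using A
      by (intro Q.emeasure_PiM) (auto intro!: measurable_sets[of _ borel borel, simplified])
    also have "\<dots> = (\<Prod>i\<in>{..<n}. emeasure (density lborel (normal_density (y i) \<sigma>)) (A i))"
      using A by (intro prod.cong refl emeasure_normal_density_translate[symmetric]) auto
    finally show "emeasure (distr (noise_dist n \<sigma>) (PiM {..<n} (\<lambda>_. lborel)) (perturb n y)) (Pi\<^sub>E {..<n} A)
        = (\<Prod>i\<in>{..<n}. emeasure (density lborel (normal_density (y i) \<sigma>)) (A i))" .
  qed simp
qed

text \<open>The pointwise maximum of the densities of \<open>N(1, \<sigma>\<^sup>2)\<close> and \<open>N(-1, \<sigma>\<^sup>2)\<close>.\<close>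
definition sign_envelope :: "real \<Rightarrow> real \<Rightarrow> real" where
  "sign_envelope \<sigma> t = (if 0 \<le> t then normal_density 1 \<sigma> t else normal_density (-1) \<sigma> t)"

lemma normal_density_mono_dist:
  assumes "(t - \<nu>)\<^sup>2 \<le> (t - \<mu>)\<^sup>2"
  shows "normal_density \<mu> \<sigma> t \<le> normal_density \<nu> \<sigma> t"
proof -
  have "(t - \<nu>)\<^sup>2 / (2 * \<sigma>\<^sup>2) \<le> (t - \<mu>)\<^sup>2 / (2 * \<sigma>\<^sup>2)"
    using assms by (intro divide_right_mono) auto
  then show ?thesis
    unfolding normal_density_def by (intro mult_left_mono) auto
qed

lemma normal_density_le_sign_envelope:
  assumes "\<mu> \<in> {-1, 1}"
  shows "normal_density \<mu> \<sigma> t \<le> sign_envelope \<sigma> t"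
  using assms normal_density_mono_dist[of t 1 \<mu> \<sigma>] normal_density_mono_dist[of t "-1" \<mu> \<sigma>]
  by (auto simp: sign_envelope_def power2_eq_square algebra_simps)

lemma normal_density_le_peak:
  assumes "0 < \<sigma>"
  shows "normal_density \<mu> \<sigma> t \<le> 1 / (sqrt (2 * pi) * \<sigma>)"
  using assms unfolding normal_density_def by (simp add: real_sqrt_mult divide_right_mono)

text \<open>The two Gaussians covering the envelope overlap except on \<open>[-1, 1)\<close>, which costs at most
  the peak density times the length \<open>2\<close>.\<close>
lemma nn_integral_sign_envelope_le:
  assumes "0 < \<sigma>"
  shows "(\<integral>\<^sup>+t. ennreal (sign_envelope \<sigma> t) \<partial>lborel) \<le> ennreal (1 + 2 / (sqrt (2 * pi) * \<sigma>))"
proof -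
  let ?\<phi> = "density lborel (normal_density 0 \<sigma>)"
  interpret \<phi>: prob_space ?\<phi>
    using assms by (rule prob_space_normal_density)
  have "(\<integral>\<^sup>+t. ennreal (sign_envelope \<sigma> t) \<partial>lborel)
      = (\<integral>\<^sup>+t. ennreal (normal_density 1 \<sigma> t) * indicator {0..} t
           + ennreal (normal_density (-1) \<sigma> t) * indicator {..<0} t \<partial>lborel)"
    by (intro nn_integral_cong) (auto simp: sign_envelope_def indicator_def)
  also have "\<dots> = emeasure (density lborel (normal_density 1 \<sigma>)) {0..}
                + emeasure (density lborel (normal_density (-1) \<sigma>)) {..<0}"
    by (subst nn_integral_add) (auto simp: emeasure_density)
  also have "\<dots> = emeasure ?\<phi> {-1..} + emeasure ?\<phi> {..<1}"
  proof -
    have "(\<lambda>t. 1 + t) -` {0..} = {-1::real..}" "(\<lambda>t. -1 + t) -` {..<0} = {..<1::real}"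
      by auto
    then show ?thesis
      by (simp add: emeasure_normal_density_translate[of "{0..}" 1]
          emeasure_normal_density_translate[of "{..<0}" "-1"])
  qed
  also have "emeasure ?\<phi> {..<1} = emeasure ?\<phi> {..< -1} + emeasure ?\<phi> {-1..<1}"
    by (subst plus_emeasure) (auto intro!: arg_cong[where f="emeasure ?\<phi>"])
  also have "emeasure ?\<phi> {-1..} + (emeasure ?\<phi> {..< -1} + emeasure ?\<phi> {-1..<1})
      = emeasure ?\<phi> (space ?\<phi>) + emeasure ?\<phi> {-1..<1}"
    by (subst add.assoc[symmetric], subst plus_emeasure)
       (auto intro!: arg_cong[where f="emeasure ?\<phi>"])
  also have "emeasure ?\<phi> {-1..<1} \<le> (\<integral>\<^sup>+t. ennreal (1 / (sqrt (2 * pi) * \<sigma>)) * indicator {-1..<1} (t::real) \<partial>lborel)"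
    by (subst emeasure_density)
       (auto intro!: nn_integral_mono ennreal_leI normal_density_le_peak[OF assms] split: split_indicator)
  also have "\<dots> = ennreal (1 / (sqrt (2 * pi) * \<sigma>)) * ennreal 2"
    by (subst nn_integral_cmult_indicator) auto
  also have "\<dots> = ennreal (2 / (sqrt (2 * pi) * \<sigma>))"
    using assms by (subst ennreal_mult[symmetric]) auto
  also have "emeasure ?\<phi> (space ?\<phi>) = 1"
    by (rule \<phi>.emeasure_space_1)
  finally show ?thesis
    using assms by (subst ennreal_plus) auto
qed

lemma finite_label_space: "finite (label_space n)"
  unfolding label_space_def by (intro finite_PiE) auto

lemma card_label_space: "card (label_space n) = 2 ^ n"
  unfolding label_space_def by (subst card_PiE) (auto simp: numeral_2_eq_2)

lemma label_space_not_empty: "label_space n \<noteq> {}"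
  unfolding label_space_def by (simp add: PiE_eq_empty_iff)

lemma space_PiM_sign_count: "space (PiM {..<n} (\<lambda>_. count_space {-1, 1::real})) = label_space n"
  unfolding label_space_def by (simp add: space_PiM)

lemma singleton_in_sets_PiM_sign_count:
  assumes "y \<in> label_space n"
  shows "{y} \<in> sets (PiM {..<n} (\<lambda>_. count_space {-1, 1::real}))"
proof -
  have "{y} = PiE {..<n} (\<lambda>i. {y i})"
    using assms by (intro PiE_singleton[symmetric]) (auto simp: label_space_def PiE_def)
  also have "\<dots> \<in> sets (PiM {..<n} (\<lambda>_. count_space {-1, 1::real}))"
    using assms by (intro sets_PiM_I_finite) (auto simp: label_space_def PiE_def Pi_def)
  finally show ?thesis .
qed

lemma prob_space_noise_dist: "0 < \<sigma> \<Longrightarrow> prob_space (noise_dist n \<sigma>)"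
  unfolding noise_dist_def by (intro prob_space_PiM prob_space_normal_density)

lemma prob_space_joint_dist: "0 < \<sigma> \<Longrightarrow> prob_space (joint_dist n \<sigma>)"
  unfolding joint_dist_def Y_dist_def
  by (intro prob_space_pair prob_space_measure_pmf prob_space_noise_dist)

definition correct_noise ::
    "nat \<Rightarrow> real \<Rightarrow> ((nat \<Rightarrow> real) \<Rightarrow> (nat \<Rightarrow> real)) \<Rightarrow> (nat \<Rightarrow> real) \<Rightarrow> (nat \<Rightarrow> real) set" where
  "correct_noise n \<sigma> A y = {e \<in> space (noise_dist n \<sigma>). A (perturb n y e) = y}"

context
  fixes n :: nat and \<sigma> :: real and A :: "(nat \<Rightarrow> real) \<Rightarrow> (nat \<Rightarrow> real)"
  assumes \<sigma>_pos: "0 < \<sigma>"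
    and A_meas: "A \<in> measurable (PiM {..<n} (\<lambda>_. lborel)) (PiM {..<n} (\<lambda>_. count_space {-1, 1}))"
begin

lemma correct_noise_sets:
  assumes "y \<in> label_space n"
  shows "correct_noise n \<sigma> A y \<in> sets (noise_dist n \<sigma>)"
proof -
  have "(A \<circ> perturb n y) -` {y} \<inter> space (noise_dist n \<sigma>) \<in> sets (noise_dist n \<sigma>)"
    using assms by (intro measurable_sets[OF measurable_comp[OF measurable_perturb A_meas]]
        singleton_in_sets_PiM_sign_count)
  then show ?thesis
    by (simp add: correct_noise_def vimage_def Int_def conj_commute)
qed

lemma emeasure_correct_noise:
  assumes y: "y \<in> label_space n"
  shows "emeasure (noise_dist n \<sigma>) (correct_noise n \<sigma> A y)
       = (\<integral>\<^sup>+z. (\<Prod>i\<in>{..<n}. ennreal (normal_density (y i) \<sigma> (z i)))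
            * indicator (A -` {y} \<inter> space (PiM {..<n} (\<lambda>_. lborel))) z \<partial>PiM {..<n} (\<lambda>_. lborel))"
proof -
  let ?PL = "PiM {..<n} (\<lambda>_. lborel :: real measure)"
  let ?B = "A -` {y} \<inter> space ?PL"
  have B_sets: "?B \<in> sets ?PL"
    using A_meas singleton_in_sets_PiM_sign_count[OF y] by (rule measurable_sets)
  have "correct_noise n \<sigma> A y = perturb n y -` ?B \<inter> space (noise_dist n \<sigma>)"
    using measurable_space[OF measurable_perturb[of n y \<sigma>]] by (auto simp: correct_noise_def)
  then have "emeasure (noise_dist n \<sigma>) (correct_noise n \<sigma> A y)
      = emeasure (distr (noise_dist n \<sigma>) ?PL (perturb n y)) ?B"
    using B_sets measurable_perturb by (subst emeasure_distr) auto
  also have "\<dots> = emeasure (density ?PL (\<lambda>z. \<Prod>i\<in>{..<n}. ennreal (normal_density (y i) \<sigma> (z i)))) ?B"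
    unfolding distr_perturb_noise_dist[OF \<sigma>_pos]
    using \<sigma>_pos by (subst PiM_density_lborel) (auto intro: prob_space_normal_density)
  also have "\<dots> = (\<integral>\<^sup>+z. (\<Prod>i\<in>{..<n}. ennreal (normal_density (y i) \<sigma> (z i))) * indicator ?B z \<partial>?PL)"
    using B_sets by (subst emeasure_density) auto
  finally show ?thesis .
qed

text \<open>For each observation \<open>z\<close> only the label \<open>A z\<close> is decoded correctly, so the densities of
  the \<open>2\<^sup>n\<close> shifted noise laws on the decoding regions add up to at most their pointwise maximum.\<close>
lemma sum_emeasure_correct_noise_le:
  "(\<Sum>y\<in>label_space n. emeasure (noise_dist n \<sigma>) (correct_noise n \<sigma> A y))
     \<le> (\<integral>\<^sup>+t. ennreal (sign_envelope \<sigma> t) \<partial>lborel) ^ n"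
proof -
  let ?PL = "PiM {..<n} (\<lambda>_. lborel :: real measure)"
  define B where "B y = A -` {y} \<inter> space ?PL" for y
  define g where "g y z = (\<Prod>i\<in>{..<n}. ennreal (normal_density (y i) \<sigma> (z i)))" for y z
  interpret L: product_sigma_finite "\<lambda>_. lborel :: real measure"
    by (intro product_sigma_finite.intro) (simp add: sigma_finite_lborel)
  have B_sets: "B y \<in> sets ?PL" if "y \<in> label_space n" for y
    unfolding B_def using A_meas singleton_in_sets_PiM_sign_count[OF that] by (rule measurable_sets)
  have g_meas: "g y \<in> borel_measurable ?PL" for y
    unfolding g_def by measurable
  have correct_eq: "emeasure (noise_dist n \<sigma>) (correct_noise n \<sigma> A y) = (\<integral>\<^sup>+z. g y z * indicator (B y) z \<partial>?PL)"
    if "y \<in> label_space n" for y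
    unfolding B_def g_def using that by (rule emeasure_correct_noise)
  have "(\<Sum>y\<in>label_space n. emeasure (noise_dist n \<sigma>) (correct_noise n \<sigma> A y))
      = (\<integral>\<^sup>+z. (\<Sum>y\<in>label_space n. g y z * indicator (B y) z) \<partial>?PL)"
    using B_sets g_meas correct_eq by (simp add: nn_integral_sum)
  also have "\<dots> \<le> (\<integral>\<^sup>+z. (\<Prod>i\<in>{..<n}. ennreal (sign_envelope \<sigma> (z i))) \<partial>?PL)"
  proof (rule nn_integral_mono)
    fix z assume z: "z \<in> space ?PL"
    have Az: "A z \<in> label_space n"
      using measurable_space[OF A_meas z] space_PiM_sign_count by simp
    have "(\<Sum>y\<in>label_space n. g y z * indicator (B y) z) = g (A z) z"
      using z Az finite_label_space by (simp add: B_def indicator_def if_distrib)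
    also have "\<dots> \<le> (\<Prod>i\<in>{..<n}. ennreal (sign_envelope \<sigma> (z i)))"
      unfolding g_def using Az
      by (intro prod_mono_ennreal ennreal_leI normal_density_le_sign_envelope)
         (auto simp: label_space_def)
    finally show "(\<Sum>y\<in>label_space n. g y z * indicator (B y) z)
        \<le> (\<Prod>i\<in>{..<n}. ennreal (sign_envelope \<sigma> (z i)))" .
  qed
  also have "\<dots> = (\<integral>\<^sup>+t. ennreal (sign_envelope \<sigma> t) \<partial>lborel) ^ n"
    by (subst L.product_nn_integral_prod) (auto simp: sign_envelope_def)
  finally show ?thesis .
qed

lemma correct_decoding_eq:
  "{ye \<in> space (joint_dist n \<sigma>). A (perturb n (fst ye) (snd ye)) = fst ye}
     = (\<Union>y\<in>label_space n. {y} \<times> correct_noise n \<sigma> A y)"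
proof -
  have "A (perturb n y e) \<in> label_space n" if "e \<in> space (noise_dist n \<sigma>)" for y e
    using measurable_space[OF A_meas measurable_space[OF measurable_perturb that]]
    by (simp add: space_PiM_sign_count)
  then show ?thesis
    by (auto simp: joint_dist_def Y_dist_def space_pair_measure correct_noise_def) metis
qed

lemma Times_correct_noise_sets:
  assumes "y \<in> label_space n"
  shows "{y} \<times> correct_noise n \<sigma> A y \<in> sets (joint_dist n \<sigma>)"
  unfolding joint_dist_def using correct_noise_sets[OF assms]
  by (intro pair_measureI) (auto simp: Y_dist_def)

lemma emeasure_correct_decoding:
  "emeasure (joint_dist n \<sigma>) (\<Union>y\<in>label_space n. {y} \<times> correct_noise n \<sigma> A y)
     = ennreal (1 / 2 ^ n) * (\<Sum>y\<in>label_space n. emeasure (noise_dist n \<sigma>) (correct_noise n \<sigma> A y))"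
proof -
  interpret N: prob_space "noise_dist n \<sigma>"
    using \<sigma>_pos by (rule prob_space_noise_dist)
  have "emeasure (joint_dist n \<sigma>) (\<Union>y\<in>label_space n. {y} \<times> correct_noise n \<sigma> A y)
      = (\<Sum>y\<in>label_space n. emeasure (joint_dist n \<sigma>) ({y} \<times> correct_noise n \<sigma> A y))"
    using Times_correct_noise_sets finite_label_space
    by (intro sum_emeasure[symmetric]) (auto simp: disjoint_family_on_def)
  also have "\<dots> = (\<Sum>y\<in>label_space n. ennreal (1 / 2 ^ n) * emeasure (noise_dist n \<sigma>) (correct_noise n \<sigma> A y))"
  proof (rule sum.cong[OF refl])
    fix y assume y: "y \<in> label_space n"
    have "emeasure (Y_dist n) {y} = ennreal (1 / 2 ^ n)"
      unfolding Y_dist_def using y label_space_not_empty finite_label_space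
      by (simp add: emeasure_pmf_single card_label_space)
    then show "emeasure (joint_dist n \<sigma>) ({y} \<times> correct_noise n \<sigma> A y)
        = ennreal (1 / 2 ^ n) * emeasure (noise_dist n \<sigma>) (correct_noise n \<sigma> A y)"
      unfolding joint_dist_def using correct_noise_sets[OF y]
      by (subst N.emeasure_pair_measure_Times) (auto simp: Y_dist_def)
  qed
  finally show ?thesis
    by (simp add: sum_distrib_left)
qed

lemma error_prob_ge:
  "1 - ((1 + 2 / (sqrt (2 * pi) * \<sigma>)) / 2) ^ n \<le> error_prob n \<sigma> A"
proof -
  interpret J: prob_space "joint_dist n \<sigma>"
    using \<sigma>_pos by (rule prob_space_joint_dist)
  define C where "C = (\<Union>y\<in>label_space n. {y} \<times> correct_noise n \<sigma> A y)"
  define b where "b = 1 + 2 / (sqrt (2 * pi) * \<sigma>)"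
  have b_nonneg: "0 \<le> b"
    using \<sigma>_pos by (simp add: b_def)
  have C_sets: "C \<in> sets (joint_dist n \<sigma>)"
    unfolding C_def using Times_correct_noise_sets finite_label_space by (intro sets.finite_UN) auto
  have "{ye \<in> space (joint_dist n \<sigma>). A (perturb n (fst ye) (snd ye)) \<noteq> fst ye}
      = space (joint_dist n \<sigma>) - C"
    unfolding C_def correct_decoding_eq[symmetric] by auto
  then have error_prob_eq: "error_prob n \<sigma> A = 1 - J.prob C"
    unfolding error_prob_def using J.prob_compl[OF C_sets] by simp
  have "(\<Sum>y\<in>label_space n. emeasure (noise_dist n \<sigma>) (correct_noise n \<sigma> A y)) \<le> ennreal b ^ n"
    using sum_emeasure_correct_noise_le power_mono[OF nn_integral_sign_envelope_le[OF \<sigma>_pos]]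
    unfolding b_def by (rule order_trans) simp
  then have "emeasure (joint_dist n \<sigma>) C \<le> ennreal (1 / 2 ^ n) * ennreal b ^ n"
    unfolding C_def emeasure_correct_decoding by (rule mult_left_mono) simp
  then have "J.prob C \<le> (b / 2) ^ n"
    using b_nonneg
    by (simp add: J.emeasure_eq_measure ennreal_power ennreal_mult[symmetric] power_divide)
  then show ?thesis
    unfolding error_prob_eq b_def by simp
qed

end

lemma real_le_two_mult_four_thirds_power: "real n \<le> 2 * (4 / 3) ^ n"
proof (induction n)
  case 0
  then show ?case by simp
next
  case (Suc n)
  show ?case
  proof (cases "n < 3")
    case True
    then have "n = 0 \<or> n = 1 \<or> n = 2" by auto
    then show ?thesis by (auto simp: power2_eq_square)
  next
    case False
    then have "real (Suc n) \<le> 4 / 3 * real n" by simp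
    also have "\<dots> \<le> 2 * (4 / 3) ^ Suc n" using Suc.IH by simp
    finally show ?thesis .
  qed
qed

lemma three_quarters_power_le:
  assumes "0 < n"
  shows "(3 / 4 :: real) ^ n \<le> 2 / real n"
proof -
  have "real n * (3 / 4) ^ n \<le> 2 * (4 / 3) ^ n * (3 / 4) ^ n"
    using real_le_two_mult_four_thirds_power[of n] by (intro mult_right_mono) auto
  also have "\<dots> = 2" by (simp add: power_mult_distrib[symmetric])
  finally show ?thesis
    using assms by (simp add: le_divide_eq mult.commute)
qed

lemma sign_envelope_mass_le_three_quarters:
  assumes "0 < \<sigma>" and "8 \<le> \<sigma>\<^sup>2"
  shows "(1 + 2 / (sqrt (2 * pi) * \<sigma>)) / 2 \<le> 3 / 4"
proof -
  have "(2 * 3) * 8 \<le> (2 * pi) * \<sigma>\<^sup>2"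
    using assms pi_gt3 by (intro mult_mono) auto
  then have "sqrt 16 \<le> sqrt ((2 * pi) * \<sigma>\<^sup>2)"
    by (intro real_sqrt_le_mono) simp
  then have "4 \<le> sqrt (2 * pi) * \<sigma>"
    using assms by (simp add: real_sqrt_mult)
  then show ?thesis
    by (simp add: divide_le_eq mult.commute)
qed

theorem theorem6:
  fixes n :: nat and \<gamma> \<sigma> :: real
  assumes "0 < n"
    and "0 < \<gamma>" and "\<gamma> < 1" and "\<gamma> \<le> 1 - 2 / real n"
    and "0 < \<sigma>" and "\<sigma>\<^sup>2 \<ge> 8 / ((1 - \<gamma>) * ln 2)"
  shows "\<gamma> \<le> (INF A \<in> measurable (PiM {..<n} (\<lambda>_. lborel)) (PiM {..<n} (\<lambda>_. count_space {-1, 1})).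
                 error_prob n \<sigma> A)"
proof (rule cINF_greatest)
  have "(\<lambda>_. \<lambda>i\<in>{..<n}. 1) \<in> measurable (PiM {..<n} (\<lambda>_. lborel)) (PiM {..<n} (\<lambda>_. count_space {-1, 1::real}))"
    by (rule measurable_const) (auto simp: space_PiM)
  then show "measurable (PiM {..<n} (\<lambda>_. lborel)) (PiM {..<n} (\<lambda>_. count_space {-1, 1::real})) \<noteq> {}"
    by blast
next
  fix A :: "(nat \<Rightarrow> real) \<Rightarrow> (nat \<Rightarrow> real)"
  assume A: "A \<in> measurable (PiM {..<n} (\<lambda>_. lborel)) (PiM {..<n} (\<lambda>_. count_space {-1, 1}))"
  text \<open>Since \<open>(1 - \<gamma>) ln 2 < 1\<close>, the noise hypothesis is only needed in the form \<open>\<sigma>\<^sup>2 \<ge> 8\<close>.\<close>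
  have "(1 - \<gamma>) * ln 2 \<le> 1"
    using assms(2,3) ln_2_less_1 by (intro mult_le_one) auto
  then have "8 \<le> \<sigma>\<^sup>2"
    using assms(3,6) ln_gt_zero[of 2] order_trans[of 8 "8 / ((1 - \<gamma>) * ln 2)"]
    by (simp add: le_divide_eq)
  then have "((1 + 2 / (sqrt (2 * pi) * \<sigma>)) / 2) ^ n \<le> (3 / 4) ^ n"
    using assms(5) sign_envelope_mass_le_three_quarters by (intro power_mono) auto
  also have "\<dots> \<le> 2 / real n"
    using assms(1) by (rule three_quarters_power_le)
  also have "\<dots> \<le> 1 - \<gamma>"
    using assms(4) by simp
  finally show "\<gamma> \<le> error_prob n \<sigma> A"
    using error_prob_ge[OF assms(5) A] by simp
qed

end
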